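(* Let $n\ge2$, $f\in C(\mathbb{R}^{n+1},\mathbb{R}^n)$ be $\kappa$-Lipschitz and $\mathbb{Z}^{n+1}$-periodic in $(r,\tau)$, and let $v(\tau;c)$ solve $\dot v=f(v,\tau)$, $v(0)=c\in\mathbb{R}^n$. Assume there is $C_0>0$ with $v_i(\tau;c^2)-v_i(\tau;c^1)\le C_0$ for all $i$, $\tau>0$ and all $c^1,c^2\in\mathbb{R}^n$ with $c^1-c^2\in[0,1]^n$. Then for all $\sigma,l,t>0$, all $c\in\mathbb{R}^n$ and all $i\in\{1,\dots,n\}$, \[v_i((\sigma+l)t;(\sigma+l)c)\le v_i(\sigma t;\sigma c)+v_i(lt;lc)+2(\|f_i\|_\infty+C_0+1).\] *)

theory Defs
  imports "HOL-Analysis.Analysis"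
begin

definition comp_sup_norm :: "(real^'n \<Rightarrow> real \<Rightarrow> real^'n) \<Rightarrow> 'n \<Rightarrow> real" where
  "comp_sup_norm f i = (SUP p\<in>(UNIV :: ((real^'n) \<times> real) set). \<bar>f (fst p) (snd p) $ i\<bar>)"

end

theory Submission
  imports Defs
begin

(* Solutions are unique since f is Lipschitz in the state, so periodicity of f makes the flow
   commute with integer translations of the initial point and with integer time shifts. Combined with the hypothesis on C0, the first turns into the
   comparison v(tau; c + d)_i <= v(tau; c)_i + d_i + 1 + C0 for an arbitrary shift d. Round
   sigma t down to an integer m; since v_i is |f_i|_oo-Lipschitz in time this costs |f_i|_oo at
   each end. By the semigroup property v((sigma + l) t) is the flow for time l t started at
   v(m; (sigma + l) c), and two applications of the comparison (at times l t and m) give the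
   bound. *)

lemma vector_differentiable_bound:
  fixes g :: "real \<Rightarrow> 'b::real_normed_vector"
  assumes "convex S"
    and "\<And>x. x \<in> S \<Longrightarrow> (g has_vector_derivative D x) (at x within S)"
    and "\<And>x. x \<in> S \<Longrightarrow> norm (D x) \<le> B"
    and "p \<in> S" "q \<in> S"
  shows "norm (g p - g q) \<le> B * \<bar>p - q\<bar>"
  using differentiable_bound[where f' = "\<lambda>x h. h *\<^sub>R D x", OF assms(1) _ _ assms(4,5)] assms(2,3)
  by (simp add: has_vector_derivative_def onorm_scaleR_left[OF bounded_linear_ident] onorm_id)

lemma lipschitz_ode_solutions_agree_on_short_interval:
  fixes x y :: "real \<Rightarrow> 'a::real_normed_vector" and F :: "'a \<Rightarrow> real \<Rightarrow> 'a"
  assumes lipschitz: "\<And>p q s. norm (F p s - F q s) \<le> K * norm (p - q)" and K: "K \<ge> 0"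
    and short: "K * h < 1"
    and dx: "\<And>s. s \<in> {a..a+h} \<Longrightarrow> (x has_vector_derivative F (x s) s) (at s within {a..a+h})"
    and dy: "\<And>s. s \<in> {a..a+h} \<Longrightarrow> (y has_vector_derivative F (y s) s) (at s within {a..a+h})"
    and start: "x a = y a"
    and s: "s \<in> {a..a+h}"
  shows "x s = y s"
proof -
  let ?S = "{a..a+h}"
  let ?z = "\<lambda>t. x t - y t"
  have dz: "(?z has_vector_derivative F (x t) t - F (y t) t) (at t within ?S)" if "t \<in> ?S" for t
    using has_vector_derivative_diff[OF dx[OF that] dy[OF that]] .
  then have "continuous_on ?S ?z"
    using continuous_on_eq_continuous_within has_vector_derivative_continuous by blast
  then have "continuous_on ?S (\<lambda>t. norm (?z t))"
    by (rule continuous_on_norm)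
  moreover have "?S \<noteq> {}"
    using s by auto
  ultimately obtain s0 where s0: "s0 \<in> ?S" and max: "\<And>t. t \<in> ?S \<Longrightarrow> norm (?z t) \<le> norm (?z s0)"
    using continuous_attains_sup[OF compact_Icc] by blast
  define M where "M = norm (?z s0)"
  have "M = norm (?z s0 - ?z a)"
    using start by (simp add: M_def)
  also have "\<dots> \<le> (K * M) * \<bar>s0 - a\<bar>"
  proof (rule vector_differentiable_bound[OF convex_real_interval(5) dz])
    show "norm (F (x t) t - F (y t) t) \<le> K * M" if "t \<in> ?S" for t
      using lipschitz[of "x t" t "y t"] mult_left_mono[OF max[OF that] K] by (simp add: M_def)
  qed (use s0 s in auto)
  also have "\<dots> \<le> (K * M) * h"
    using s0 K by (intro mult_left_mono) (auto simp: M_def)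
  finally have "(1 - K * h) * M \<le> 0"
    by (simp add: algebra_simps)
  then have "M \<le> 0"
    using short by (simp add: mult_le_0_iff)
  then show ?thesis
    using max[OF s] by (simp add: M_def)
qed

lemma lipschitz_ode_unique:
  fixes x y :: "real \<Rightarrow> 'a::real_normed_vector" and F :: "'a \<Rightarrow> real \<Rightarrow> 'a"
  assumes lipschitz: "\<And>p q s. norm (F p s - F q s) \<le> K * norm (p - q)" and K: "K \<ge> 0"
    and dx: "\<And>s. s \<ge> 0 \<Longrightarrow> (x has_vector_derivative F (x s) s) (at s within {0..})"
    and dy: "\<And>s. s \<ge> 0 \<Longrightarrow> (y has_vector_derivative F (y s) s) (at s within {0..})"
    and start: "x 0 = y 0" and \<tau>: "\<tau> \<ge> 0"
  shows "x \<tau> = y \<tau>"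
proof -
  define h where "h = 1 / (K + 1)"
  have h: "h > 0" "K * h < 1"
    using K by (auto simp: h_def field_simps)
  have agree: "\<forall>s\<in>{0..real k * h}. x s = y s" for k :: nat
  proof (induction k)
    case 0
    then show ?case using start by simp
  next
    case (Suc k)
    let ?a = "real k * h"
    have sub: "{?a..?a+h} \<subseteq> {0..}"
      using h by auto
    have "x s = y s" if "s \<in> {?a..?a+h}" for s
    proof (rule lipschitz_ode_solutions_agree_on_short_interval[OF lipschitz K h(2) _ _ _ that])
      show "(x has_vector_derivative F (x t) t) (at t within {?a..?a+h})" if "t \<in> {?a..?a+h}" for t
        using has_vector_derivative_within_subset[OF dx sub] that sub by blast
      show "(y has_vector_derivative F (y t) t) (at t within {?a..?a+h})" if "t \<in> {?a..?a+h}" for t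
        using has_vector_derivative_within_subset[OF dy sub] that sub by blast
      show "x ?a = y ?a"
        using Suc.IH h by simp
    qed
    with Suc.IH show ?case
      by (force simp: algebra_simps)
  qed
  obtain k :: nat where "\<tau> / h \<le> real k"
    using real_arch_simple by blast
  then show ?thesis
    using agree[of k] \<tau> h by (auto simp: field_simps)
qed

lemma periodic_continuous_bounded:
  fixes f :: "real^'n \<Rightarrow> real \<Rightarrow> 'b::real_normed_vector"
  assumes cont: "continuous_on UNIV (\<lambda>p::(real^'n) \<times> real. f (fst p) (snd p))"
    and periodic: "\<And>x s k m. (\<forall>j. k $ j \<in> \<int>) \<Longrightarrow> m \<in> \<int> \<Longrightarrow> f (x + k) (s + m) = f x s"
  obtains M where "\<And>x s. norm (f x s) \<le> M"
proof -
  let ?cell = "cbox (0::real^'n) (\<chi> j. 1) \<times> {0..1::real}"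
  have "compact ((\<lambda>p. f (fst p) (snd p)) ` ?cell)"
    by (intro compact_continuous_image continuous_on_subset[OF cont] compact_Times) auto
  then obtain M where M: "\<And>p. p \<in> ?cell \<Longrightarrow> norm (f (fst p) (snd p)) \<le> M"
    using compact_imp_bounded[OF \<open>compact _\<close>] unfolding bounded_iff by (meson imageI)
  have "norm (f x s) \<le> M" for x s
  proof -
    define k :: "real^'n" where "k = (\<chi> j. of_int \<lfloor>x $ j\<rfloor>)"
    have "f x s = f ((x - k) + k) ((s - of_int \<lfloor>s\<rfloor>) + of_int \<lfloor>s\<rfloor>)"
      by simp
    also have "\<dots> = f (x - k) (s - of_int \<lfloor>s\<rfloor>)"
      by (rule periodic) (auto simp: k_def)
    moreover have "(x - k, s - of_int \<lfloor>s\<rfloor>) \<in> ?cell"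
      using floor_correct[of s] by (auto simp: k_def mem_box_cart) linarith+
    ultimately show ?thesis
      using M by fastforce
  qed
  then show ?thesis
    using that by blast
qed

lemma abs_component_le_comp_sup_norm:
  assumes "\<And>x s. norm (f x s) \<le> M"
  shows "\<bar>f x s $ i\<bar> \<le> comp_sup_norm f i"
proof -
  have "bdd_above ((\<lambda>p. \<bar>f (fst p) (snd p) $ i\<bar>) ` UNIV)"
    using assms component_le_norm_cart order_trans by (fastforce intro!: bdd_aboveI2)
  from cSUP_upper[OF _ this, of "(x, s)"] show ?thesis
    by (simp add: comp_sup_norm_def)
qed

locale periodic_flow =
  fixes f :: "real^'n \<Rightarrow> real \<Rightarrow> real^'n" and v :: "real \<Rightarrow> real^'n \<Rightarrow> real^'n" and \<kappa> :: real
  assumes lipschitz: "\<And>a b s. norm (f a s - f b s) \<le> \<kappa> * norm (a - b)"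
    and lipschitz_nonneg: "\<kappa> \<ge> 0"
    and periodic: "\<And>x s k m. (\<forall>j. k $ j \<in> \<int>) \<Longrightarrow> m \<in> \<int> \<Longrightarrow> f (x + k) (s + m) = f x s"
    and flow_derivative:
      "\<And>c \<tau>. \<tau> \<ge> 0 \<Longrightarrow> ((\<lambda>t. v t c) has_vector_derivative f (v \<tau> c) \<tau>) (at \<tau> within {0..})"
    and flow_0: "\<And>c. v 0 c = c"
begin

lemma flow_unique:
  assumes "\<And>s. s \<ge> 0 \<Longrightarrow> (y has_vector_derivative f (y s) s) (at s within {0..})" and "\<tau> \<ge> 0"
  shows "y \<tau> = v \<tau> (y 0)"
  using lipschitz_ode_unique[OF lipschitz lipschitz_nonneg assms(1) flow_derivative _ assms(2)]
  by (simp add: flow_0)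

lemma flow_add_integer_vector:
  assumes k: "\<forall>j. k $ j \<in> \<int>" and \<tau>: "\<tau> \<ge> 0"
  shows "v \<tau> (c + k) = v \<tau> c + k"
proof -
  have "((\<lambda>t. v t c + k) has_vector_derivative f (v s c + k) s) (at s within {0..})" if "s \<ge> 0" for s
    using has_vector_derivative_add[OF flow_derivative[OF that] has_vector_derivative_const]
      periodic[OF k, where s = s and m = 0] by simp
  from flow_unique[OF this \<tau>] show ?thesis
    by (simp add: flow_0)
qed

lemma flow_integer_time_shift:
  assumes \<tau>: "\<tau> \<ge> 0"
  shows "v (real m + \<tau>) c = v \<tau> (v (real m) c)"
proof -
  have "((\<lambda>t. v (real m + t) c) has_vector_derivative f (v (real m + s) c) s) (at s within {0..})"
    if s: "s \<ge> 0" for s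
  proof -
    have shift: "((\<lambda>t. real m + t) has_vector_derivative 1) (at s within {0..})"
      by (auto intro!: derivative_eq_intros)
    have "((\<lambda>t. v t c) has_vector_derivative f (v (real m + s) c) (real m + s))
            (at (real m + s) within (\<lambda>t. real m + t) ` {0..})"
      by (rule has_vector_derivative_within_subset[OF flow_derivative]) (use s in auto)
    moreover have "f (v (real m + s) c) (real m + s) = f (v (real m + s) c) s"
      using periodic[where k = 0 and m = "real m" and s = s] by (simp add: add.commute)
    ultimately show ?thesis
      using vector_diff_chain_within[OF shift] by (simp add: o_def)
  qed
  from flow_unique[OF this \<tau>] show ?thesis
    by simp
qed

lemma flow_component_lipschitz_in_time:
  assumes B: "\<And>x s. \<bar>f x s $ i\<bar> \<le> B" and "a \<ge> 0" "b \<ge> 0"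
  shows "\<bar>v a c $ i - v b c $ i\<bar> \<le> B * \<bar>a - b\<bar>"
proof -
  have "((\<lambda>t. v t c $ i) has_vector_derivative f (v s c) s $ i) (at s within {0..})" if "s \<in> {0..}" for s
    using bounded_linear.has_vector_derivative[OF bounded_linear_vec_nth flow_derivative, of s c i] that
    by simp
  from vector_differentiable_bound[OF convex_real_interval(1) this, of B a b] show ?thesis
    using assms by simp
qed

end

locale periodic_flow_spread = periodic_flow f v \<kappa>
  for f :: "real^'n \<Rightarrow> real \<Rightarrow> real^'n" and v \<kappa> +
  fixes C0 :: real
  assumes spread_nonneg: "C0 \<ge> 0"
    and spread: "\<And>c1 c2 j \<tau>. (\<forall>k. 0 \<le> (c1 - c2) $ k \<and> (c1 - c2) $ k \<le> 1) \<Longrightarrow> \<tau> > 0 \<Longrightarrow>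
                   v \<tau> c2 $ j - v \<tau> c1 $ j \<le> C0"
begin

(* Write d = K + rho with K the integer part and rho in [0,1)^n: the integer part commutes with
   the flow, and c + rho lies below c + (1,...,1) within a unit cube. *)
lemma flow_translate_component_le:
  assumes \<tau>: "\<tau> \<ge> 0"
  shows "v \<tau> (c + d) $ j \<le> v \<tau> c $ j + d $ j + 1 + C0"
proof (cases "\<tau> = 0")
  case True
  then show ?thesis
    using spread_nonneg by (simp add: flow_0)
next
  case False
  with \<tau> have \<tau>: "\<tau> > 0" by simp
  define K :: "real^'n" where "K = (\<chi> j. of_int \<lfloor>d $ j\<rfloor>)"
  define one :: "real^'n" where "one = (\<chi> j. 1)"
  have "0 \<le> ((c + one) - (c + (d - K))) $ k \<and> ((c + one) - (c + (d - K))) $ k \<le> 1" for k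
    using floor_correct[of "d $ k"] by (simp add: one_def K_def) linarith
  then have "v \<tau> (c + (d - K)) $ j \<le> v \<tau> (c + one) $ j + C0"
    using spread[OF _ \<tau>, of "c + one" "c + (d - K)" j] by simp
  also have "v \<tau> (c + one) = v \<tau> c + one"
    using flow_add_integer_vector \<tau> by (simp add: one_def)
  moreover have "v \<tau> (c + d) = v \<tau> (c + (d - K)) + K"
    using flow_add_integer_vector[of K \<tau> "c + (d - K)"] \<tau> by (simp add: K_def)
  ultimately show ?thesis
    by (simp add: K_def one_def) (use floor_correct[of "d $ j"] in linarith)
qed

lemma flow_almost_subadditive:
  assumes B: "\<And>x s. \<bar>f x s $ i\<bar> \<le> B" and T1: "T1 \<ge> 0" and T2: "T2 \<ge> 0"
  shows "v (T1 + T2) (a + b) $ i \<le> v T1 a $ i + v T2 b $ i + 2 * (B + C0 + 1)"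
proof -
  define m where "m = nat \<lfloor>T1\<rfloor>"
  have m: "real m \<le> T1" "T1 - real m \<le> 1"
    using T1 by (auto simp: m_def) linarith
  have B0: "B \<ge> 0"
    using B[of 0 0] by linarith
  define P where "P = v (real m) (a + b)"
  have "v (T1 + T2) (a + b) $ i \<le> v (real m + T2) (a + b) $ i + B"
    using flow_component_lipschitz_in_time[OF B, of "T1 + T2" "real m + T2" "a + b"]
      mult_left_le[OF m(2) B0] m T2 by auto
  also have "v (real m + T2) (a + b) = v T2 (b + (P - b))"
    using flow_integer_time_shift[OF T2] by (simp add: P_def)
  also have "v T2 (b + (P - b)) $ i \<le> v T2 b $ i + (P - b) $ i + 1 + C0"
    using flow_translate_component_le[OF T2] .
  also have "(P - b) $ i \<le> v (real m) a $ i + 1 + C0"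
    using flow_translate_component_le[of "real m" a b i] by (simp add: P_def)
  also have "v (real m) a $ i \<le> v T1 a $ i + B"
    using flow_component_lipschitz_in_time[OF B, of "real m" T1 a] mult_left_le[OF m(2) B0] m
    by auto
  finally show ?thesis
    by simp
qed

end

theorem lemma3p2:
  fixes f :: "real^'n \<Rightarrow> real \<Rightarrow> real^'n"
    and v :: "real \<Rightarrow> real^'n \<Rightarrow> real^'n"
    and \<kappa> C0 :: real
  assumes n2: "CARD('n) \<ge> 2"
    and cont: "continuous_on UNIV (\<lambda>p::(real^'n) \<times> real. f (fst p) (snd p))"
    and lip: "\<kappa>-lipschitz_on UNIV (\<lambda>p::(real^'n) \<times> real. f (fst p) (snd p))"
    and per: "\<And>x s k m. (\<forall>j. k $ j \<in> \<int>) \<Longrightarrow> m \<in> \<int> \<Longrightarrow> f (x + k) (s + m) = f x s"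
    and ode: "\<And>c \<tau>. \<tau> \<ge> 0 \<Longrightarrow>
               ((\<lambda>t. v t c) has_vector_derivative f (v \<tau> c) \<tau>) (at \<tau> within {0..})"
    and init: "\<And>c. v 0 c = c"
    and C0pos: "C0 > 0"
    and C0: "\<And>c1 c2 j \<tau>. (\<forall>k. 0 \<le> (c1 - c2) $ k \<and> (c1 - c2) $ k \<le> 1) \<Longrightarrow> \<tau> > 0 \<Longrightarrow>
               v \<tau> c2 $ j - v \<tau> c1 $ j \<le> C0"
    and \<sigma>: "\<sigma> > 0" and l: "l > 0" and t: "t > 0"
  shows "v ((\<sigma> + l) * t) ((\<sigma> + l) *\<^sub>R c) $ i
           \<le> v (\<sigma> * t) (\<sigma> *\<^sub>R c) $ i + v (l * t) (l *\<^sub>R c) $ i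
              + 2 * (comp_sup_norm f i + C0 + 1)"
proof -
  have "norm (f a s - f b s) \<le> \<kappa> * norm (a - b)" for a b s
    using lipschitz_onD[OF lip, of "(a, s)" "(b, s)"] by (simp add: dist_Pair_Pair dist_norm)
  then interpret periodic_flow_spread f v \<kappa> C0
    using lipschitz_on_nonneg[OF lip] per ode init C0pos C0 by unfold_locales auto
  obtain M where "\<And>x s. norm (f x s) \<le> M"
    using periodic_continuous_bounded[OF cont per] by blast
  then have "\<And>x s. \<bar>f x s $ i\<bar> \<le> comp_sup_norm f i"
    by (rule abs_component_le_comp_sup_norm)
  from flow_almost_subadditive[OF this, of "\<sigma> * t" "l * t" "\<sigma> *\<^sub>R c" "l *\<^sub>R c"] show ?thesis
    using \<sigma> l t by (simp add: distrib_right scaleR_add_left)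
qed

end
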